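(* Let $\lambda\in\mathbb{C}$ with $\operatorname{Re}\lambda\ge 0$, and let $(p,q)\in H^2(\mathbb{R})\times H^2(\mathbb{R})$ be a solution of the eigenvalue problem \[ \lambda p = p_{\xi\xi}+c\,p_\xi+F_w(\widehat w)\,\widehat y\,(hp-(1-h)q)+F(\widehat w)\,q,\qquad \lambda q = \varepsilon q_{\xi\xi}+c\,q_\xi-F_w(\widehat w)\,\widehat y\,(hp-(1-h)q)-F(\widehat w)\,q . \] Then for every real $\epsilon_1>0$, \[ \operatorname{Re}\lambda\int_{\mathbb{R}}|p|^2\,d\xi\le h\int_{\mathbb{R}}F_w(\widehat w)\,\widehat y\,|p|^2\,d\xi+\int_{\mathbb{R}}\big(F(\widehat w)+(1-h)F_w(\widehat w)\,\widehat y\big)\Big(\frac{|q|^2}{4\epsilon_1}+\epsilon_1|p|^2\Big)d\xi, \] and \[ \big(\operatorname{Re}\lambda+|\operatorname{Im}\lambda|\big)\int_{\mathbb{R}}|p|^2\,d\xi\le \frac{c^2}{4}\int_{\mathbb{R}}|p|^2\,d\xi+h\int_{\mathbb{R}}F_w(\widehat w)\,\widehat y\,|p|^2\,d\xi+\int_{\mathbb{R}}\big(F(\widehat w)+(1-h)F_w(\widehat w)\,\widehat y\big)\Big(\frac{|q|^2}{2\epsilon_1}+\epsilon_1|p|^2\Big)d\xi . \]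
   Context: Parameters: $\varepsilon\in(0,1)$, $h\in(0,1)$, Zeldovich number $Z>0$, $\sigma\in(0,1)$, ignition temperature $T_{ign}>0$ and $\delta>0$ with $T_{ign}+2\delta<1$. The reaction rate $F=F_\delta$ is \[ F(v)=\begin{cases}\exp\!\Big(Z\frac{v-h}{\sigma+(1-\sigma)v}\Big), & v\ge T_{ign}+2\delta,\\[2pt] \exp\!\Big(Z\frac{v-h}{\sigma+(1-\sigma)v}\Big)H^\delta(v-T_{ign}-\delta), & T_{ign}\le v<T_{ign}+2\delta,\\[2pt] 0, & v<T_{ign},\end{cases} \] where $H^\delta(x)=1/(1+e^{4x\delta/(\delta^2-x^2)})$ for $|x|<\delta$, $H^\delta(x)=1$ for $x\ge\delta$, $H^\delta(x)=0$ for $x\le-\delta$. $F$ is nonnegative and nondecreasing, and $F_w$ denotes its derivative (so $F_w\ge 0$). $c>0$ and $(\widehat u,\widehat y)$ is a traveling front, i.e. a solution of $u''+cu'+yF(hu+(1-h)(1-y))=0$, $\varepsilon y''+cy'-yF(hu+(1-h)(1-y))=0$ with $(u,y)\to(1,0)$ as $\xi\to-\infty$ and $(u,y)\to(0,1)$ as $\xi\to+\infty$; it is assumed that $0\le\widehat y\le 1$ and $0\le \widehat w\le 1$, where $\widehat w=h\widehat u+(1-h)(1-\widehat y)$. *)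

theory Defs
  imports "HOL-Analysis.Analysis"
begin

text \<open>Smoothed Heaviside function H^delta (sign of the exponent corrected so that
  H^delta increases smoothly from 0 to 1 on (-delta, delta)).\<close>
definition Hdelta :: "real \<Rightarrow> real \<Rightarrow> real" where
  "Hdelta \<delta> x =
     (if \<delta> \<le> x then 1
      else if x \<le> - \<delta> then 0
      else 1 / (1 + exp (- (4 * x * \<delta> / (\<delta>\<^sup>2 - x\<^sup>2)))))"

definition Frate :: "real \<Rightarrow> real \<Rightarrow> real \<Rightarrow> real \<Rightarrow> real \<Rightarrow> real \<Rightarrow> real" where
  "Frate Z h \<sigma> Tign \<delta> v =
     (if Tign + 2 * \<delta> \<le> v then exp (Z * (v - h) / (\<sigma> + (1 - \<sigma>) * v))
      else if Tign \<le> v then exp (Z * (v - h) / (\<sigma> + (1 - \<sigma>) * v)) * Hdelta \<delta> (v - Tign - \<delta>)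
      else 0)"

definition Fw :: "real \<Rightarrow> real \<Rightarrow> real \<Rightarrow> real \<Rightarrow> real \<Rightarrow> real \<Rightarrow> real" where
  "Fw Z h \<sigma> Tign \<delta> v = deriv (Frate Z h \<sigma> Tign \<delta>) v"

definition L2 :: "(real \<Rightarrow> complex) \<Rightarrow> bool" where
  "L2 f \<longleftrightarrow> f \<in> borel_measurable lborel \<and> integrable lborel (\<lambda>x. (norm (f x))\<^sup>2)"

text \<open>For solutions of the eigenvalue problem (continuous coefficients) H^2 solutions are
  exactly the C^2 ones, so derivatives are taken classically.\<close>
definition H2 :: "(real \<Rightarrow> complex) \<Rightarrow> (real \<Rightarrow> complex) \<Rightarrow> (real \<Rightarrow> complex) \<Rightarrow> bool" where
  "H2 f f1 f2 \<longleftrightarrow>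
     (\<forall>x. (f has_vector_derivative f1 x) (at x)) \<and>
     (\<forall>x. (f1 has_vector_derivative f2 x) (at x)) \<and>
     L2 f \<and> L2 f1 \<and> L2 f2"

end

theory Submission
  imports Defs "HOL-Real_Asymp.Real_Asymp"
begin

text \<open>Multiply the equation for \<open>p\<close> by \<open>cnj p\<close> and integrate over the line. For \<open>p \<in> H\<^sup>2\<close>
  integration by parts gives \<open>\<integral> p'' cnj p = - \<integral> |p'|\<^sup>2\<close> and shows that \<open>\<integral> p' cnj p\<close> is purely
  imaginary. With \<open>a = F\<^sub>w(w) y\<close> and \<open>f = F(w)\<close> the real part becomes
  \<open>Re \<lambda> \<parallel>p\<parallel>\<^sup>2 = - \<parallel>p'\<parallel>\<^sup>2 + h \<integral> a |p|\<^sup>2 + \<integral> (f - (1 - h) a) Re (q cnj p)\<close> and the imaginary part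
  \<open>Im \<lambda> \<parallel>p\<parallel>\<^sup>2 = \<integral> c Im (p' cnj p) + (f - (1 - h) a) Im (q cnj p)\<close>. Dropping \<open>- \<parallel>p'\<parallel>\<^sup>2\<close> and
  Young's inequality \<open>|q| |p| \<le> |q|\<^sup>2 / (4 \<epsilon>\<^sub>1) + \<epsilon>\<^sub>1 |p|\<^sup>2\<close> give the first estimate. For the second,
  \<open>c |p'| |p| \<le> |p'|\<^sup>2 + c\<^sup>2/4 |p|\<^sup>2\<close> absorbs the gradient term, and \<open>|Re z| + |Im z| \<le> \<surd>2 |z|\<close>
  turns \<open>4 \<epsilon>\<^sub>1\<close> into \<open>2 \<epsilon>\<^sub>1\<close>.

  For \<open>F\<^sub>w\<close> this needs \<open>F\<close> to be \<open>C\<^sup>1\<close> on \<open>[0, 1]\<close>, which holds because \<open>H\<^sup>\<delta>\<close> is the classical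
  smooth step \<open>\<psi>(\<delta> + x) / (\<psi>(\<delta> + x) + \<psi>(\<delta> - x))\<close> with \<open>\<psi>(t) = exp (- 2 \<delta> / t)\<close> for \<open>t > 0\<close>.\<close>

section \<open>Integrals of derivatives on the real line\<close>

lemma integrable_tendsto_at_top_imp_zero:
  fixes g :: "real \<Rightarrow> real"
  assumes g_int: "integrable lborel g" and lim: "(g \<longlongrightarrow> L) at_top"
  shows "L = 0"
proof (rule ccontr)
  assume "L \<noteq> 0"
  then have "eventually (\<lambda>x. dist (g x) L < \<bar>L\<bar> / 2) at_top"
    using tendstoD[OF lim, of "\<bar>L\<bar> / 2"] by simp
  then obtain M where near_L: "\<And>x. x \<ge> M \<Longrightarrow> dist (g x) L < \<bar>L\<bar> / 2"
    by (auto simp: eventually_at_top_linorder)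
  have M: "\<bar>L\<bar> / 2 \<le> \<bar>g x\<bar>" if "x \<ge> M" for x
    using near_L[OF that] unfolding dist_real_def by arith
  have lower: "real n * (\<bar>L\<bar> / 2) \<le> (LINT x|lborel. \<bar>g x\<bar>)" for n :: nat
  proof -
    have "real n * (\<bar>L\<bar> / 2) = (LINT x|lborel. indicator {M..M + real n} x * (\<bar>L\<bar> / 2))"
      by simp
    also have "\<dots> \<le> (LINT x|lborel. \<bar>g x\<bar>)"
      using M g_int
      by (intro integral_mono integrable_mult_left integrable_mult_right integrable_real_indicator)
         (auto simp: indicator_def)
    finally show ?thesis .
  qed
  obtain n :: nat where "(LINT x|lborel. \<bar>g x\<bar>) / (\<bar>L\<bar> / 2) < real n"
    using reals_Archimedean2 by blast
  then show False
    using lower[of n] \<open>L \<noteq> 0\<close> by (simp add: divide_less_eq)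
qed

lemma integrable_tendsto_at_bot_imp_zero:
  fixes g :: "real \<Rightarrow> real"
  assumes g_int: "integrable lborel g" and lim: "(g \<longlongrightarrow> L) at_bot"
  shows "L = 0"
proof (rule integrable_tendsto_at_top_imp_zero)
  show "integrable lborel (\<lambda>x. g (- x))"
    using lborel_integrable_real_affine_iff[of "-1" g 0] g_int by simp
  show "((\<lambda>x. g (- x)) \<longlongrightarrow> L) at_top"
    using filterlim_compose[OF lim filterlim_uminus_at_bot_at_top] by simp
qed

lemma set_integral_Icc_deriv:
  fixes g g' :: "real \<Rightarrow> real"
  assumes g_deriv: "\<And>x. (g has_real_derivative g' x) (at x)" and g'_int: "integrable lborel g'"
    and "a \<le> b"
  shows "(LINT x:{a..b}|lborel. g' x) = g b - g a"
proof -
  have "set_integrable lborel {a..b} g'"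
    unfolding set_integrable_def using g'_int by (intro integrable_mult_indicator) auto
  moreover have "(g' has_integral g b - g a) {a..b}"
    using \<open>a \<le> b\<close> g_deriv[unfolded has_real_derivative_iff_has_vector_derivative]
    by (intro fundamental_theorem_of_calculus) (auto intro: has_vector_derivative_at_within)
  ultimately show ?thesis
    using set_borel_integral_eq_integral(2) by (metis integral_unique)
qed

lemma set_integral_atMost_deriv:
  fixes g g' :: "real \<Rightarrow> real"
  assumes g_deriv: "\<And>x. (g has_real_derivative g' x) (at x)"
    and g_int: "integrable lborel g" and g'_int: "integrable lborel g'"
  shows "(LINT x:{..b}|lborel. g' x) = g b"
proof -
  have "set_integrable lborel {..b} g'"
    unfolding set_integrable_def using g'_int by (intro integrable_mult_indicator) auto
  then have "((\<lambda>a. LINT x:{a..b}|lborel. g' x) \<longlongrightarrow> (LINT x:{..b}|lborel. g' x)) at_bot"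
    by (intro tendsto_set_lebesgue_integral_at_bot) auto
  moreover have "eventually (\<lambda>a. (LINT x:{a..b}|lborel. g' x) = g b - g a) at_bot"
    using set_integral_Icc_deriv[OF g_deriv g'_int]
    by (auto simp: eventually_at_bot_linorder intro!: exI[of _ b])
  ultimately have "((\<lambda>a. g b - g a) \<longlongrightarrow> (LINT x:{..b}|lborel. g' x)) at_bot"
    by (rule Lim_transform_eventually)
  then have "((\<lambda>a. g b - (g b - g a)) \<longlongrightarrow> g b - (LINT x:{..b}|lborel. g' x)) at_bot"
    by (intro tendsto_diff tendsto_const)
  then have "g b - (LINT x:{..b}|lborel. g' x) = 0"
    by (intro integrable_tendsto_at_bot_imp_zero[OF g_int]) simp
  then show ?thesis by simp
qed

lemma integral_deriv_eq_zero:
  fixes g g' :: "real \<Rightarrow> real"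
  assumes g_deriv: "\<And>x. (g has_real_derivative g' x) (at x)"
    and g_int: "integrable lborel g" and g'_int: "integrable lborel g'"
  shows "(LINT x|lborel. g' x) = 0"
proof (rule integrable_tendsto_at_top_imp_zero[OF g_int])
  have "((\<lambda>b. LINT x:{..b}|lborel. g' x) \<longlongrightarrow> (LINT x|lborel. g' x)) at_top"
    using tendsto_integral_at_top[OF _ g'_int] by (simp add: set_lebesgue_integral_def)
  then show "(g \<longlongrightarrow> (LINT x|lborel. g' x)) at_top"
    by (simp add: set_integral_atMost_deriv[OF g_deriv g_int g'_int])
qed

section \<open>A smooth step function\<close>

definition flat_exp :: "real \<Rightarrow> real \<Rightarrow> real" where
  "flat_exp a t = (if 0 < t then exp (- a / t) else 0)"

definition flat_exp_deriv :: "real \<Rightarrow> real \<Rightarrow> real" where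
  "flat_exp_deriv a t = (if 0 < t then a / t\<^sup>2 * exp (- a / t) else 0)"

lemma flat_exp_nonneg: "0 \<le> flat_exp a t"
  by (simp add: flat_exp_def)

lemma flat_exp_deriv_nonneg: "0 \<le> a \<Longrightarrow> 0 \<le> flat_exp_deriv a t"
  by (simp add: flat_exp_deriv_def)

lemma flat_exp_has_real_derivative:
  assumes "0 < a"
  shows "(flat_exp a has_real_derivative flat_exp_deriv a t) (at t)"
proof -
  consider "0 < t" | "t < 0" | "t = 0" by linarith
  then show ?thesis
  proof cases
    case 1
    have "((\<lambda>t. exp (- a / t)) has_real_derivative a / t\<^sup>2 * exp (- a / t)) (at t)"
      by (rule derivative_eq_intros refl)+ (use 1 in \<open>auto simp: power2_eq_square\<close>)
    then have "((\<lambda>t. exp (- a / t)) has_real_derivative flat_exp_deriv a t) (at t)"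
      using 1 by (simp add: flat_exp_deriv_def)
    then show ?thesis
      by (rule has_field_derivative_transform_within_open[where S = "{0<..}"])
        (use 1 in \<open>auto simp: flat_exp_def\<close>)
  next
    case 2
    show ?thesis
      by (rule has_field_derivative_transform_within_open[where f = "\<lambda>_. 0" and S = "{..<0}"])
        (use 2 in \<open>auto simp: flat_exp_def flat_exp_deriv_def\<close>)
  next
    case 3
    have "((\<lambda>y. exp (- a / y) / y) \<longlongrightarrow> 0) (at_right 0)"
      using \<open>0 < a\<close> by real_asymp
    then have "((\<lambda>y. (flat_exp a y - flat_exp a 0) / (y - 0)) \<longlongrightarrow> 0) (at_right 0)"
      by (rule Lim_transform_eventually) (auto simp: flat_exp_def eventually_at_filter)
    moreover have "((\<lambda>y. (flat_exp a y - flat_exp a 0) / (y - 0)) \<longlongrightarrow> 0) (at_left 0)"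
      by (rule tendsto_eventually) (auto simp: flat_exp_def eventually_at_filter)
    ultimately show ?thesis
      using 3 by (simp add: has_field_derivative_iff flat_exp_deriv_def filterlim_at_split)
  qed
qed

lemma isCont_flat_exp_deriv:
  assumes "0 < a"
  shows "isCont (flat_exp_deriv a) t"
proof -
  consider "0 < t" | "t < 0" | "t = 0" by linarith
  then show ?thesis
  proof cases
    case 1
    have "eventually (\<lambda>y. a / y\<^sup>2 * exp (- a / y) = flat_exp_deriv a y) (nhds t)"
      using eventually_nhds_in_open[of "{0<..}" t] 1
      by (auto simp: flat_exp_deriv_def elim!: eventually_mono)
    moreover have "isCont (\<lambda>t. a / t\<^sup>2 * exp (- a / t)) t"
      using 1 by (auto intro!: continuous_intros)
    ultimately show ?thesis by (simp add: isCont_cong)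
  next
    case 2
    have "eventually (\<lambda>y. y < 0) (nhds t)"
      using eventually_nhds_in_open[of "{..<0}" t] 2 by auto
    then have "eventually (\<lambda>y. 0 = flat_exp_deriv a y) (nhds t)"
      by (rule eventually_mono) (simp add: flat_exp_deriv_def)
    then show ?thesis by (simp add: isCont_cong)
  next
    case 3
    have "((\<lambda>y. a / y\<^sup>2 * exp (- a / y)) \<longlongrightarrow> 0) (at_right 0)"
      using \<open>0 < a\<close> by real_asymp
    then have "(flat_exp_deriv a \<longlongrightarrow> 0) (at_right 0)"
      by (rule Lim_transform_eventually) (auto simp: flat_exp_deriv_def eventually_at_filter)
    moreover have "(flat_exp_deriv a \<longlongrightarrow> 0) (at_left 0)"
      by (rule tendsto_eventually) (auto simp: flat_exp_deriv_def eventually_at_filter)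
    ultimately show ?thesis
      using 3 by (simp add: isCont_def flat_exp_deriv_def filterlim_at_split)
  qed
qed

lemma flat_exp_has_real_derivative_chain [derivative_intros]:
  "0 < a \<Longrightarrow> (f has_real_derivative f') (at x within S) \<Longrightarrow>
    ((\<lambda>x. flat_exp a (f x)) has_real_derivative flat_exp_deriv a (f x) * f') (at x within S)"
  using DERIV_chain2[OF flat_exp_has_real_derivative] by blast

lemma continuous_on_flat_exp [continuous_intros]:
  "0 < a \<Longrightarrow> continuous_on S f \<Longrightarrow> continuous_on S (\<lambda>x. flat_exp a (f x))"
  by (rule continuous_on_compose2[of UNIV "flat_exp a"])
    (auto intro!: continuous_at_imp_continuous_on DERIV_isCont flat_exp_has_real_derivative)

lemma continuous_on_flat_exp_deriv [continuous_intros]: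
  "0 < a \<Longrightarrow> continuous_on S f \<Longrightarrow> continuous_on S (\<lambda>x. flat_exp_deriv a (f x))"
  by (rule continuous_on_compose2[of UNIV "flat_exp_deriv a"])
    (auto intro!: continuous_at_imp_continuous_on isCont_flat_exp_deriv)

lemma flat_exp_reflected_sum_pos: "0 < d \<Longrightarrow> 0 < flat_exp a (d + x) + flat_exp a (d - x)"
  by (cases "0 < x") (auto simp: flat_exp_def add_pos_nonneg add_nonneg_pos)

lemma Hdelta_eq_flat_exp:
  assumes "0 < d"
  shows "Hdelta d x = flat_exp (2 * d) (d + x) / (flat_exp (2 * d) (d + x) + flat_exp (2 * d) (d - x))"
proof -
  consider "d \<le> x" | "x \<le> - d" | "- d < x" "x < d" by linarith
  then show ?thesis
  proof cases
    case 3
    define N where "N = exp (- (2 * d) / (d + x))"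
    define M where "M = exp (- (2 * d) / (d - x))"
    have "- (2 * d) / (d - x) - - (2 * d) / (d + x) = - (4 * x * d / (d\<^sup>2 - x\<^sup>2))"
      using 3 by (simp add: field_simps power2_eq_square)
    then have "M / N = exp (- (4 * x * d / (d\<^sup>2 - x\<^sup>2)))"
      by (simp add: M_def N_def exp_diff[symmetric])
    moreover have "N / (N + M) = 1 / (1 + M / N)"
      by (simp add: N_def field_simps)
    ultimately show ?thesis
      using 3 by (simp add: Hdelta_def flat_exp_def N_def M_def)
  qed (use assms in \<open>auto simp: Hdelta_def flat_exp_def\<close>)
qed

definition Hdelta_deriv :: "real \<Rightarrow> real \<Rightarrow> real" where
  "Hdelta_deriv d x =
     (flat_exp_deriv (2 * d) (d + x) * flat_exp (2 * d) (d - x)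
       + flat_exp (2 * d) (d + x) * flat_exp_deriv (2 * d) (d - x))
     / (flat_exp (2 * d) (d + x) + flat_exp (2 * d) (d - x))\<^sup>2"

lemma Hdelta_has_real_derivative:
  assumes "0 < d"
  shows "(Hdelta d has_real_derivative Hdelta_deriv d x) (at x)"
proof -
  define N where "N x = flat_exp (2 * d) (d + x)" for x
  define M where "M x = flat_exp (2 * d) (d - x)" for x
  have N': "(N has_real_derivative flat_exp_deriv (2 * d) (d + x)) (at x)"
    unfolding N_def using assms by (auto intro!: derivative_eq_intros)
  have M': "(M has_real_derivative - flat_exp_deriv (2 * d) (d - x)) (at x)"
    unfolding M_def using assms by (auto intro!: derivative_eq_intros)
  have "N x + M x \<noteq> 0"
    unfolding N_def M_def using flat_exp_reflected_sum_pos[OF assms] by (metis less_irrefl)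
  from DERIV_divide[OF N' DERIV_add[OF N' M'] this]
  have "((\<lambda>x. N x / (N x + M x)) has_real_derivative Hdelta_deriv d x) (at x)"
    by (simp add: Hdelta_deriv_def N_def M_def power2_eq_square algebra_simps)
  moreover have "Hdelta d = (\<lambda>x. N x / (N x + M x))"
    using Hdelta_eq_flat_exp[OF assms] by (auto simp: N_def M_def)
  ultimately show ?thesis by simp
qed

lemma Hdelta_nonneg: "0 < d \<Longrightarrow> 0 \<le> Hdelta d x"
  by (simp add: Hdelta_eq_flat_exp flat_exp_nonneg)

lemma Hdelta_deriv_nonneg: "0 < d \<Longrightarrow> 0 \<le> Hdelta_deriv d x"
  by (simp add: Hdelta_deriv_def flat_exp_nonneg flat_exp_deriv_nonneg)

lemma continuous_on_Hdelta [continuous_intros]: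
  "0 < d \<Longrightarrow> continuous_on S f \<Longrightarrow> continuous_on S (\<lambda>x. Hdelta d (f x))"
  by (rule continuous_on_compose2[of UNIV "Hdelta d"])
    (auto intro!: continuous_at_imp_continuous_on DERIV_isCont Hdelta_has_real_derivative)

lemma continuous_on_Hdelta_deriv [continuous_intros]:
  assumes "0 < d" "continuous_on S f"
  shows "continuous_on S (\<lambda>x. Hdelta_deriv d (f x))"
  unfolding Hdelta_deriv_def
  using assms flat_exp_reflected_sum_pos[OF assms(1), THEN less_imp_neq, symmetric]
  by (intro continuous_intros) auto

section \<open>The reaction rate\<close>

definition arrhenius :: "real \<Rightarrow> real \<Rightarrow> real \<Rightarrow> real \<Rightarrow> real" where
  "arrhenius Z h \<sigma> v = exp (Z * (v - h) / (\<sigma> + (1 - \<sigma>) * v))"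

definition arrhenius_deriv :: "real \<Rightarrow> real \<Rightarrow> real \<Rightarrow> real \<Rightarrow> real" where
  "arrhenius_deriv Z h \<sigma> v = arrhenius Z h \<sigma> v * (Z * (\<sigma> + (1 - \<sigma>) * h) / (\<sigma> + (1 - \<sigma>) * v)\<^sup>2)"

definition Frate_deriv :: "real \<Rightarrow> real \<Rightarrow> real \<Rightarrow> real \<Rightarrow> real \<Rightarrow> real \<Rightarrow> real" where
  "Frate_deriv Z h \<sigma> T d v =
     arrhenius_deriv Z h \<sigma> v * Hdelta d (v - T - d) + arrhenius Z h \<sigma> v * Hdelta_deriv d (v - T - d)"

text \<open>\<open>H\<^sup>\<delta>\<close> already vanishes below \<open>T\<close> and equals \<open>1\<close> above \<open>T + 2 \<delta>\<close>, so the three branches of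
  \<open>Frate\<close> are one formula.\<close>

lemma Frate_eq_arrhenius_Hdelta:
  "0 < d \<Longrightarrow> Frate Z h \<sigma> T d = (\<lambda>v. arrhenius Z h \<sigma> v * Hdelta d (v - T - d))"
  by (auto simp: fun_eq_iff Frate_def arrhenius_def Hdelta_def)

lemma arrhenius_has_real_derivative:
  assumes "\<sigma> + (1 - \<sigma>) * v \<noteq> 0"
  shows "(arrhenius Z h \<sigma> has_real_derivative arrhenius_deriv Z h \<sigma> v) (at v)"
  unfolding arrhenius_def [abs_def] arrhenius_deriv_def
  using assms by (auto intro!: derivative_eq_intros simp: field_simps power2_eq_square)

lemma Frate_has_real_derivative:
  assumes "0 < d" "\<sigma> + (1 - \<sigma>) * v \<noteq> 0"
  shows "(Frate Z h \<sigma> T d has_real_derivative Frate_deriv Z h \<sigma> T d v) (at v)"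
proof -
  have "((\<lambda>v. v - T - d) has_real_derivative 1) (at v)"
    by (auto intro!: derivative_eq_intros)
  from DERIV_chain2[OF Hdelta_has_real_derivative[OF assms(1)] this]
  have "((\<lambda>v. Hdelta d (v - T - d)) has_real_derivative Hdelta_deriv d (v - T - d)) (at v)"
    by simp
  from DERIV_mult[OF arrhenius_has_real_derivative[OF assms(2)] this] show ?thesis
    unfolding Frate_eq_arrhenius_Hdelta[OF assms(1)] Frate_deriv_def by (simp add: algebra_simps)
qed

lemma Fw_eq_Frate_deriv:
  "0 < d \<Longrightarrow> \<sigma> + (1 - \<sigma>) * v \<noteq> 0 \<Longrightarrow> Fw Z h \<sigma> T d v = Frate_deriv Z h \<sigma> T d v"
  unfolding Fw_def by (intro DERIV_imp_deriv Frate_has_real_derivative)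

lemma Frate_nonneg: "0 < d \<Longrightarrow> 0 \<le> Frate Z h \<sigma> T d v"
  by (simp add: Frate_eq_arrhenius_Hdelta arrhenius_def Hdelta_nonneg)

lemma Fw_nonneg:
  assumes "0 < d" "0 \<le> Z" "0 \<le> \<sigma> + (1 - \<sigma>) * h" "\<sigma> + (1 - \<sigma>) * v \<noteq> 0"
  shows "0 \<le> Fw Z h \<sigma> T d v"
  using assms Hdelta_nonneg[OF assms(1)] Hdelta_deriv_nonneg[OF assms(1)]
  by (simp add: Fw_eq_Frate_deriv Frate_deriv_def arrhenius_deriv_def arrhenius_def)

lemma continuous_on_Frate:
  "0 < d \<Longrightarrow> continuous_on {v. 0 < \<sigma> + (1 - \<sigma>) * v} (Frate Z h \<sigma> T d)"
  unfolding Frate_eq_arrhenius_Hdelta arrhenius_def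
  by (intro continuous_intros) auto

lemma continuous_on_Fw:
  assumes "0 < d"
  shows "continuous_on {v. 0 < \<sigma> + (1 - \<sigma>) * v} (Fw Z h \<sigma> T d)"
proof -
  have "continuous_on {v. 0 < \<sigma> + (1 - \<sigma>) * v} (Frate_deriv Z h \<sigma> T d)"
    unfolding Frate_deriv_def [abs_def] arrhenius_deriv_def arrhenius_def
    using assms by (intro continuous_intros) auto
  then show ?thesis
    by (rule continuous_on_eq) (use assms in \<open>auto simp: Fw_eq_Frate_deriv\<close>)
qed

lemma unit_interval_denominator_pos:
  fixes \<sigma> v :: real
  assumes "0 < \<sigma>" "0 \<le> v" "v \<le> 1"
  shows "0 < \<sigma> + (1 - \<sigma>) * v"
proof -
  have "\<sigma> + (1 - \<sigma>) * v = \<sigma> * (1 - v) + v" by algebra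
  moreover have "0 \<le> \<sigma> * (1 - v)" using assms by simp
  ultimately show ?thesis
    using assms by (cases "v = 0") (simp, linarith)
qed

section \<open>Integration by parts in \<open>H\<^sup>2\<close>\<close>

lemma borel_measurable_cnj [measurable]: "cnj \<in> borel_measurable borel"
  by (intro borel_measurable_continuous_onI continuous_intros)

lemma L2_integrable_norm_sq: "L2 f \<Longrightarrow> integrable lborel (\<lambda>x. (cmod (f x))\<^sup>2)"
  by (simp add: L2_def)

lemma Re_mult_cnj_self: "Re (z * cnj z) = (cmod z)\<^sup>2"
  by (metis Re_complex_of_real complex_norm_square)

lemma abs_Re_mult_cnj_le: "\<bar>Re (z * cnj w)\<bar> \<le> cmod z * cmod w"
  by (metis abs_Re_le_cmod complex_mod_cnj norm_mult)

lemma abs_Im_mult_cnj_le: "\<bar>Im (z * cnj w)\<bar> \<le> cmod z * cmod w"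
  by (metis abs_Im_le_cmod complex_mod_cnj norm_mult)

lemma integrable_bounded_by_L2_product:
  fixes k :: "real \<Rightarrow> real"
  assumes "L2 u" "L2 v" "k \<in> borel_measurable lborel"
    and bound: "\<And>x. \<bar>k x\<bar> \<le> C * (cmod (u x) * cmod (v x))"
  shows "integrable lborel k"
proof (rule Bochner_Integration.integrable_bound)
  show "integrable lborel (\<lambda>x. \<bar>C\<bar> * ((cmod (u x))\<^sup>2 + (cmod (v x))\<^sup>2))"
    using assms(1,2) by (auto simp: L2_def)
  show "AE x in lborel. norm (k x) \<le> norm (\<bar>C\<bar> * ((cmod (u x))\<^sup>2 + (cmod (v x))\<^sup>2))"
  proof (rule AE_I2)
    fix x
    have "2 * (cmod (u x) * cmod (v x)) \<le> (cmod (u x))\<^sup>2 + (cmod (v x))\<^sup>2"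
      using sum_squares_bound[of "cmod (u x)" "cmod (v x)"] by simp
    then have "cmod (u x) * cmod (v x) \<le> (cmod (u x))\<^sup>2 + (cmod (v x))\<^sup>2"
      using mult_nonneg_nonneg[OF norm_ge_zero norm_ge_zero, of "u x" "v x"] by linarith
    then have "C * (cmod (u x) * cmod (v x)) \<le> \<bar>C\<bar> * ((cmod (u x))\<^sup>2 + (cmod (v x))\<^sup>2)"
      by (intro mult_mono abs_ge_self) auto
    then show "norm (k x) \<le> norm (\<bar>C\<bar> * ((cmod (u x))\<^sup>2 + (cmod (v x))\<^sup>2))"
      using bound[of x] by simp
  qed
qed (fact assms(3))

lemma integrable_bounded_linear_mult_cnj:
  fixes L :: "complex \<Rightarrow> real" and w :: "real \<Rightarrow> real"
  assumes L: "bounded_linear L" and "L2 u" "L2 v"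
    and w: "w \<in> borel_measurable lborel" "\<And>x. \<bar>w x\<bar> \<le> C"
  shows "integrable lborel (\<lambda>x. w x * L (u x * cnj (v x)))"
proof -
  obtain K where K: "\<And>z. norm (L z) \<le> norm z * K"
    using bounded_linear.bounded[OF L] by blast
  have [measurable]: "u \<in> borel_measurable lborel" "v \<in> borel_measurable lborel"
    "L \<in> borel_measurable borel"
    using assms by (simp_all add: L2_def borel_measurable_continuous_onI linear_continuous_on)
  show ?thesis
  proof (rule integrable_bounded_by_L2_product[OF \<open>L2 u\<close> \<open>L2 v\<close>, where C = "C * K"])
    fix x
    have "\<bar>L (u x * cnj (v x))\<bar> \<le> cmod (u x) * cmod (v x) * K"
      using K[of "u x * cnj (v x)"] by (simp add: norm_mult)
    then have "\<bar>w x\<bar> * \<bar>L (u x * cnj (v x))\<bar> \<le> C * (cmod (u x) * cmod (v x) * K)"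
      using w(2)[of x] by (intro mult_mono) auto
    then show "\<bar>w x * L (u x * cnj (v x))\<bar> \<le> C * K * (cmod (u x) * cmod (v x))"
      by (simp add: abs_mult ac_simps)
  qed (use w(1) in measurable)
qed

lemma integrable_linear_mult_cnj:
  fixes L :: "complex \<Rightarrow> real"
  assumes "bounded_linear L" "L2 u" "L2 v"
  shows "integrable lborel (\<lambda>x. L (u x * cnj (v x)))"
  using integrable_bounded_linear_mult_cnj[OF assms, of "\<lambda>_. 1" 1] by simp

lemma integral_by_parts_mult_cnj:
  fixes L :: "complex \<Rightarrow> real"
  assumes L: "bounded_linear L"
    and f': "\<And>x. (f has_vector_derivative f' x) (at x)" and g': "\<And>x. (g has_vector_derivative g' x) (at x)"
    and L2: "L2 f" "L2 f'" "L2 g" "L2 g'"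
  shows "(LINT x|lborel. L (f' x * cnj (g x))) = - (LINT x|lborel. L (f x * cnj (g' x)))"
proof -
  have int: "integrable lborel (\<lambda>x. L (f' x * cnj (g x)))" "integrable lborel (\<lambda>x. L (f x * cnj (g' x)))"
    using integrable_linear_mult_cnj[OF L] L2 by auto
  have "((\<lambda>x. L (f x * cnj (g x))) has_real_derivative
      L (f' x * cnj (g x)) + L (f x * cnj (g' x))) (at x)" for x
    using bounded_linear.has_vector_derivative
        [OF L has_vector_derivative_mult[OF f' has_vector_derivative_cnj[OF g']]]
    by (simp add: has_real_derivative_iff_has_vector_derivative algebra_simps
        real_vector.linear_add[OF bounded_linear.linear[OF L]])
  then have "(LINT x|lborel. L (f' x * cnj (g x)) + L (f x * cnj (g' x))) = 0"
    by (rule integral_deriv_eq_zero) (use int integrable_linear_mult_cnj[OF L L2(1,3)] in auto)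
  then show ?thesis
    using int by simp
qed

lemma H2_integral_Re_deriv_mult_cnj:
  assumes "H2 p p1 p2"
  shows "(LINT x|lborel. Re (p1 x * cnj (p x))) = 0"
proof -
  have "Re (p x * cnj (p1 x)) = Re (p1 x * cnj (p x))" for x
    by (simp add: algebra_simps)
  moreover have "(LINT x|lborel. Re (p1 x * cnj (p x))) = - (LINT x|lborel. Re (p x * cnj (p1 x)))"
    using assms unfolding H2_def by (intro integral_by_parts_mult_cnj bounded_linear_Re) auto
  ultimately show ?thesis by (simp only:)
qed

lemma H2_integral_Re_second_deriv_mult_cnj:
  assumes "H2 p p1 p2"
  shows "(LINT x|lborel. Re (p2 x * cnj (p x))) = - (LINT x|lborel. (cmod (p1 x))\<^sup>2)"
proof -
  have "(LINT x|lborel. Re (p2 x * cnj (p x))) = - (LINT x|lborel. Re (p1 x * cnj (p1 x)))"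
    using assms unfolding H2_def by (intro integral_by_parts_mult_cnj bounded_linear_Re) auto
  then show ?thesis by (simp only: Re_mult_cnj_self)
qed

lemma H2_integral_Im_second_deriv_mult_cnj:
  assumes "H2 p p1 p2"
  shows "(LINT x|lborel. Im (p2 x * cnj (p x))) = 0"
proof -
  have "(LINT x|lborel. Im (p2 x * cnj (p x))) = - (LINT x|lborel. Im (p1 x * cnj (p1 x)))"
    using assms unfolding H2_def by (intro integral_by_parts_mult_cnj bounded_linear_Im) auto
  then show ?thesis by simp
qed

section \<open>Energy estimates\<close>

lemma young_mult_le:
  fixes s t e :: real
  assumes "0 < e"
  shows "s * t \<le> s\<^sup>2 / (4 * e) + e * t\<^sup>2"
proof -
  have "0 \<le> (s - 2 * e * t)\<^sup>2 / (4 * e)"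
    using assms by simp
  also have "\<dots> = s\<^sup>2 / (4 * e) + e * t\<^sup>2 - s * t"
    using assms by (simp add: field_simps power2_eq_square)
  finally show ?thesis by simp
qed

lemma weighted_Re_mult_cnj_le:
  fixes G K e :: real
  assumes "\<bar>G\<bar> \<le> K" "0 < e"
  shows "G * Re (z * cnj w) \<le> K * ((cmod z)\<^sup>2 / (4 * e) + e * (cmod w)\<^sup>2)"
proof -
  have "G * Re (z * cnj w) \<le> \<bar>G\<bar> * \<bar>Re (z * cnj w)\<bar>"
    by (metis abs_ge_self abs_mult)
  also have "\<dots> \<le> K * (cmod z * cmod w)"
    using assms(1) abs_Re_mult_cnj_le by (intro mult_mono) auto
  also have "\<dots> \<le> K * ((cmod z)\<^sup>2 / (4 * e) + e * (cmod w)\<^sup>2)"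
    using assms young_mult_le by (intro mult_left_mono) auto
  finally show ?thesis .
qed

lemma weighted_abs_Re_add_abs_Im_mult_cnj_le:
  fixes G K e :: real
  assumes "\<bar>G\<bar> \<le> K" "0 < e"
  shows "\<bar>G * Re (z * cnj w)\<bar> + \<bar>G * Im (z * cnj w)\<bar>
    \<le> K * ((cmod z)\<^sup>2 / (2 * e) + e * (cmod w)\<^sup>2)"
proof -
  have "\<bar>Re (z * cnj w)\<bar> + \<bar>Im (z * cnj w)\<bar> \<le> sqrt 2 * (cmod z * cmod w)"
    using complex_abs_le_norm[of "z * cnj w"] by (simp only: norm_mult complex_mod_cnj)
  also have "\<dots> = cmod z * (sqrt 2 * cmod w)"
    by simp
  also have "\<dots> \<le> (cmod z)\<^sup>2 / (4 * (e / 2)) + e / 2 * (sqrt 2 * cmod w)\<^sup>2"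
    using assms(2) by (intro young_mult_le) simp
  also have "\<dots> = (cmod z)\<^sup>2 / (2 * e) + e * (cmod w)\<^sup>2"
    by (simp add: power_mult_distrib)
  finally have "\<bar>Re (z * cnj w)\<bar> + \<bar>Im (z * cnj w)\<bar> \<le> (cmod z)\<^sup>2 / (2 * e) + e * (cmod w)\<^sup>2" .
  then have "\<bar>G\<bar> * (\<bar>Re (z * cnj w)\<bar> + \<bar>Im (z * cnj w)\<bar>)
      \<le> K * ((cmod z)\<^sup>2 / (2 * e) + e * (cmod w)\<^sup>2)"
    using assms(1) by (intro mult_mono) auto
  then show ?thesis
    by (simp only: abs_mult distrib_left)
qed

lemma abs_mult_Im_mult_cnj_le: "\<bar>c * Im (z * cnj w)\<bar> \<le> (cmod z)\<^sup>2 + c\<^sup>2 / 4 * (cmod w)\<^sup>2"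
proof -
  have "\<bar>c * Im (z * cnj w)\<bar> \<le> cmod z * (\<bar>c\<bar> * cmod w)"
    using abs_Im_mult_cnj_le[of z w] by (simp add: abs_mult mult_left_mono mult.left_commute)
  also have "\<dots> \<le> (cmod z)\<^sup>2 / (4 * (1 / 4)) + 1 / 4 * (\<bar>c\<bar> * cmod w)\<^sup>2"
    by (rule young_mult_le) simp
  also have "\<dots> = (cmod z)\<^sup>2 + c\<^sup>2 / 4 * (cmod w)\<^sup>2"
    by (simp add: power_mult_distrib)
  finally show ?thesis .
qed

lemma eigen_eq_mult_cnj:
  fixes lam P P1 P2 Q :: complex and c h a f :: real
  assumes "lam * P = P2 + of_real c * P1 + of_real a * (of_real h * P - of_real (1 - h) * Q) + of_real f * Q"
  shows "Re lam * (cmod P)\<^sup>2 = Re (P2 * cnj P) + c * Re (P1 * cnj P) + h * (a * (cmod P)\<^sup>2)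
           + (f - (1 - h) * a) * Re (Q * cnj P)"
    and "Im lam * (cmod P)\<^sup>2 = Im (P2 * cnj P) + c * Im (P1 * cnj P) + (f - (1 - h) * a) * Im (Q * cnj P)"
proof -
  have "lam * (P * cnj P) = (lam * P) * cnj P"
    by (simp only: mult.assoc)
  also have "\<dots> = P2 * cnj P + of_real c * (P1 * cnj P) + of_real (h * a) * (P * cnj P)
      + of_real (f - (1 - h) * a) * (Q * cnj P)"
    unfolding assms by (simp add: algebra_simps)
  finally have eq: "lam * (P * cnj P) = P2 * cnj P + of_real c * (P1 * cnj P)
      + of_real (h * a) * (P * cnj P) + of_real (f - (1 - h) * a) * (Q * cnj P)" .
  then have "of_real ((cmod P)\<^sup>2) * lam = P2 * cnj P + of_real c * (P1 * cnj P)
      + of_real (h * a) * of_real ((cmod P)\<^sup>2) + of_real (f - (1 - h) * a) * (Q * cnj P)"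
    by (simp only: complex_norm_square ac_simps)
  note Re_eq = arg_cong[OF this, of Re] and Im_eq = arg_cong[OF this, of Im]
  have Re_of_real_mult: "Re (of_real r * z) = r * Re z" and Im_of_real_mult: "Im (of_real r * z) = r * Im z"
    for r and z :: complex
    by simp_all
  show "Re lam * (cmod P)\<^sup>2 = Re (P2 * cnj P) + c * Re (P1 * cnj P) + h * (a * (cmod P)\<^sup>2)
       + (f - (1 - h) * a) * Re (Q * cnj P)"
    using Re_eq unfolding Re_of_real_mult plus_complex.sel Re_complex_of_real by (simp add: ac_simps)
  show "Im lam * (cmod P)\<^sup>2 = Im (P2 * cnj P) + c * Im (P1 * cnj P) + (f - (1 - h) * a) * Im (Q * cnj P)"
    using Im_eq unfolding Im_of_real_mult plus_complex.sel Im_complex_of_real by (simp add: ac_simps)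
qed

locale linearized_eigenproblem =
  fixes p p1 p2 q :: "real \<Rightarrow> complex" and a f :: "real \<Rightarrow> real"
    and lam :: complex and c h B :: real
  assumes p_H2: "H2 p p1 p2" and q_L2: "L2 q"
    and a_measurable [measurable]: "a \<in> borel_measurable lborel"
    and f_measurable [measurable]: "f \<in> borel_measurable lborel"
    and a_nonneg: "\<And>x. 0 \<le> a x" and a_le: "\<And>x. a x \<le> B"
    and f_nonneg: "\<And>x. 0 \<le> f x" and f_le: "\<And>x. f x \<le> B"
    and h_le_1: "h \<le> 1"
    and eigen_eq: "\<And>x. lam * p x = p2 x + of_real c * p1 x
        + of_real (a x) * (of_real h * p x - of_real (1 - h) * q x) + of_real (f x) * q x"
begin

lemma L2_p: "L2 p" and L2_p1: "L2 p1" and L2_p2: "L2 p2"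
  using p_H2 by (simp_all add: H2_def)

lemma coefficient_bounds:
  shows "\<bar>f x - (1 - h) * a x\<bar> \<le> f x + (1 - h) * a x"
    and "\<bar>f x + (1 - h) * a x\<bar> \<le> (2 - h) * B"
proof -
  have "0 \<le> (1 - h) * a x" "(1 - h) * a x \<le> (1 - h) * B"
    using h_le_1 a_nonneg[of x] a_le[of x] by (simp_all add: mult_left_mono)
  then show "\<bar>f x - (1 - h) * a x\<bar> \<le> f x + (1 - h) * a x"
    and "\<bar>f x + (1 - h) * a x\<bar> \<le> (2 - h) * B"
    using f_nonneg[of x] f_le[of x] by (simp_all add: algebra_simps)
qed

lemma integrable_coefficient_mult_cnj:
  assumes "bounded_linear L" "L2 u" "L2 v"
  shows "integrable lborel (\<lambda>x. a x * L (u x * cnj (v x)))"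
    and "integrable lborel (\<lambda>x. (f x - (1 - h) * a x) * L (u x * cnj (v x)))"
    and "integrable lborel (\<lambda>x. (f x + (1 - h) * a x) * L (u x * cnj (v x)))"
proof -
  show "integrable lborel (\<lambda>x. a x * L (u x * cnj (v x)))"
    using a_nonneg a_le by (intro integrable_bounded_linear_mult_cnj[OF assms, where C = B]) auto
  show "integrable lborel (\<lambda>x. (f x - (1 - h) * a x) * L (u x * cnj (v x)))"
    using coefficient_bounds
    by (intro integrable_bounded_linear_mult_cnj[OF assms, where C = "(2 - h) * B"])
       (measurable, meson abs_ge_self order_trans)
  show "integrable lborel (\<lambda>x. (f x + (1 - h) * a x) * L (u x * cnj (v x)))"
    using coefficient_bounds
    by (intro integrable_bounded_linear_mult_cnj[OF assms, where C = "(2 - h) * B"]) auto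
qed

lemma integrable_weight_mult_norms:
  "integrable lborel (\<lambda>x. (f x + (1 - h) * a x) * ((cmod (q x))\<^sup>2 / d + e * (cmod (p x))\<^sup>2))"
proof -
  have "integrable lborel (\<lambda>x. (f x + (1 - h) * a x) * (cmod (u x))\<^sup>2)" if "L2 u" for u
    using integrable_coefficient_mult_cnj(3)[OF bounded_linear_Re that that]
    by (simp only: Re_mult_cnj_self)
  from this[OF q_L2] this[OF L2_p]
  have "integrable lborel (\<lambda>x. (1 / d) * ((f x + (1 - h) * a x) * (cmod (q x))\<^sup>2)
      + e * ((f x + (1 - h) * a x) * (cmod (p x))\<^sup>2))"
    by (intro Bochner_Integration.integrable_add integrable_mult_right)
  moreover have "(\<lambda>x. (1 / d) * ((f x + (1 - h) * a x) * (cmod (q x))\<^sup>2)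
      + e * ((f x + (1 - h) * a x) * (cmod (p x))\<^sup>2))
    = (\<lambda>x. (f x + (1 - h) * a x) * ((cmod (q x))\<^sup>2 / d + e * (cmod (p x))\<^sup>2))"
    by (simp add: fun_eq_iff algebra_simps add_divide_distrib)
  ultimately show ?thesis by (simp only:)
qed

lemma energy_identity_Re:
  "Re lam * (LINT x|lborel. (cmod (p x))\<^sup>2)
     = h * (LINT x|lborel. a x * (cmod (p x))\<^sup>2)
       + (LINT x|lborel. (f x - (1 - h) * a x) * Re (q x * cnj (p x)))
       - (LINT x|lborel. (cmod (p1 x))\<^sup>2)"
proof -
  have ints: "integrable lborel (\<lambda>x. Re (p2 x * cnj (p x)))" "integrable lborel (\<lambda>x. Re (p1 x * cnj (p x)))"
    "integrable lborel (\<lambda>x. a x * (cmod (p x))\<^sup>2)"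
    "integrable lborel (\<lambda>x. (f x - (1 - h) * a x) * Re (q x * cnj (p x)))"
    using integrable_linear_mult_cnj[OF bounded_linear_Re] integrable_coefficient_mult_cnj[OF bounded_linear_Re]
      L2_p L2_p1 L2_p2 q_L2 by (auto simp flip: Re_mult_cnj_self)
  have "Re lam * (LINT x|lborel. (cmod (p x))\<^sup>2) = (LINT x|lborel. Re lam * (cmod (p x))\<^sup>2)"
    by simp
  also have "\<dots> = (LINT x|lborel. Re (p2 x * cnj (p x)) + c * Re (p1 x * cnj (p x))
      + h * (a x * (cmod (p x))\<^sup>2) + (f x - (1 - h) * a x) * Re (q x * cnj (p x)))"
    by (simp only: eigen_eq_mult_cnj(1)[OF eigen_eq])
  also have "\<dots> = (LINT x|lborel. Re (p2 x * cnj (p x))) + c * (LINT x|lborel. Re (p1 x * cnj (p x)))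
      + h * (LINT x|lborel. a x * (cmod (p x))\<^sup>2)
      + (LINT x|lborel. (f x - (1 - h) * a x) * Re (q x * cnj (p x)))"
    using ints by simp
  finally show ?thesis
    using H2_integral_Re_second_deriv_mult_cnj[OF p_H2] H2_integral_Re_deriv_mult_cnj[OF p_H2] by simp
qed

lemma energy_identity_Im:
  "Im lam * (LINT x|lborel. (cmod (p x))\<^sup>2)
     = (LINT x|lborel. c * Im (p1 x * cnj (p x)) + (f x - (1 - h) * a x) * Im (q x * cnj (p x)))"
proof -
  have ints: "integrable lborel (\<lambda>x. Im (p2 x * cnj (p x)))" "integrable lborel (\<lambda>x. Im (p1 x * cnj (p x)))"
    "integrable lborel (\<lambda>x. (f x - (1 - h) * a x) * Im (q x * cnj (p x)))"
    using integrable_linear_mult_cnj[OF bounded_linear_Im] integrable_coefficient_mult_cnj[OF bounded_linear_Im]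
      L2_p L2_p1 L2_p2 q_L2 by auto
  have "Im lam * (LINT x|lborel. (cmod (p x))\<^sup>2) = (LINT x|lborel. Im lam * (cmod (p x))\<^sup>2)"
    by simp
  also have "\<dots> = (LINT x|lborel. Im (p2 x * cnj (p x))
      + (c * Im (p1 x * cnj (p x)) + (f x - (1 - h) * a x) * Im (q x * cnj (p x))))"
    by (simp only: eigen_eq_mult_cnj(2)[OF eigen_eq] add.assoc)
  also have "\<dots> = (LINT x|lborel. Im (p2 x * cnj (p x)))
      + (LINT x|lborel. c * Im (p1 x * cnj (p x)) + (f x - (1 - h) * a x) * Im (q x * cnj (p x)))"
    using ints by simp
  finally show ?thesis
    using H2_integral_Im_second_deriv_mult_cnj[OF p_H2] by simp
qed

lemma estimate_Re:
  assumes "0 < e"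
  shows "Re lam * (LINT x|lborel. (cmod (p x))\<^sup>2)
     \<le> h * (LINT x|lborel. a x * (cmod (p x))\<^sup>2)
       + (LINT x|lborel. (f x + (1 - h) * a x) * ((cmod (q x))\<^sup>2 / (4 * e) + e * (cmod (p x))\<^sup>2))"
proof -
  have "(LINT x|lborel. (f x - (1 - h) * a x) * Re (q x * cnj (p x)))
      \<le> (LINT x|lborel. (f x + (1 - h) * a x) * ((cmod (q x))\<^sup>2 / (4 * e) + e * (cmod (p x))\<^sup>2))"
    using coefficient_bounds(1) assms
    by (intro integral_mono integrable_coefficient_mult_cnj(2)[OF bounded_linear_Re q_L2 L2_p]
        integrable_weight_mult_norms weighted_Re_mult_cnj_le)
  moreover have "0 \<le> (LINT x|lborel. (cmod (p1 x))\<^sup>2)"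
    by simp
  ultimately show ?thesis
    using energy_identity_Re by linarith
qed

lemma estimate_Re_Im:
  assumes "0 < e"
  shows "(Re lam + \<bar>Im lam\<bar>) * (LINT x|lborel. (cmod (p x))\<^sup>2)
     \<le> c\<^sup>2 / 4 * (LINT x|lborel. (cmod (p x))\<^sup>2) + h * (LINT x|lborel. a x * (cmod (p x))\<^sup>2)
       + (LINT x|lborel. (f x + (1 - h) * a x) * ((cmod (q x))\<^sup>2 / (2 * e) + e * (cmod (p x))\<^sup>2))"
proof -
  define G where "G x = f x - (1 - h) * a x" for x
  define W where "W x = (f x + (1 - h) * a x) * ((cmod (q x))\<^sup>2 / (2 * e) + e * (cmod (p x))\<^sup>2)" for x
  define Im_part where "Im_part x = c * Im (p1 x * cnj (p x)) + G x * Im (q x * cnj (p x))" for x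
  have int_Re: "integrable lborel (\<lambda>x. G x * Re (q x * cnj (p x)))"
    unfolding G_def by (rule integrable_coefficient_mult_cnj(2)[OF bounded_linear_Re q_L2 L2_p])
  have int_Im: "integrable lborel (\<lambda>x. \<bar>Im_part x\<bar>)"
    using integrable_linear_mult_cnj[OF bounded_linear_Im L2_p1 L2_p]
      integrable_coefficient_mult_cnj(2)[OF bounded_linear_Im q_L2 L2_p]
    unfolding Im_part_def G_def by auto
  have int_W: "integrable lborel W"
    unfolding W_def by (rule integrable_weight_mult_norms)
  have pointwise: "G x * Re (q x * cnj (p x)) + \<bar>Im_part x\<bar>
      \<le> (cmod (p1 x))\<^sup>2 + c\<^sup>2 / 4 * (cmod (p x))\<^sup>2 + W x" for x
    using weighted_abs_Re_add_abs_Im_mult_cnj_le[OF coefficient_bounds(1) assms, of x "q x" "p x"]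
      abs_mult_Im_mult_cnj_le[of c "p1 x" "p x"] abs_ge_self[of "G x * Re (q x * cnj (p x))"]
      abs_triangle_ineq[of "c * Im (p1 x * cnj (p x))" "G x * Im (q x * cnj (p x))"]
    unfolding Im_part_def G_def W_def by linarith
  have "\<bar>Im lam\<bar> * (LINT x|lborel. (cmod (p x))\<^sup>2)
      = \<bar>Im lam * (LINT x|lborel. (cmod (p x))\<^sup>2)\<bar>"
    by (simp add: abs_mult)
  also have "\<dots> = \<bar>LINT x|lborel. Im_part x\<bar>"
    by (simp only: energy_identity_Im Im_part_def G_def)
  also have "\<dots> \<le> (LINT x|lborel. \<bar>Im_part x\<bar>)"
    using integral_norm_bound[of lborel Im_part] by simp
  finally have "(Re lam + \<bar>Im lam\<bar>) * (LINT x|lborel. (cmod (p x))\<^sup>2)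
      \<le> h * (LINT x|lborel. a x * (cmod (p x))\<^sup>2) - (LINT x|lborel. (cmod (p1 x))\<^sup>2)
        + (LINT x|lborel. G x * Re (q x * cnj (p x)) + \<bar>Im_part x\<bar>)"
    using energy_identity_Re int_Re int_Im by (simp add: G_def distrib_right)
  also have "(LINT x|lborel. G x * Re (q x * cnj (p x)) + \<bar>Im_part x\<bar>)
      \<le> (LINT x|lborel. (cmod (p1 x))\<^sup>2 + c\<^sup>2 / 4 * (cmod (p x))\<^sup>2 + W x)"
    using int_Re int_Im int_W L2_integrable_norm_sq[OF L2_p1] L2_integrable_norm_sq[OF L2_p] pointwise
    by (intro integral_mono) auto
  also have "\<dots> = (LINT x|lborel. (cmod (p1 x))\<^sup>2) + c\<^sup>2 / 4 * (LINT x|lborel. (cmod (p x))\<^sup>2)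
      + (LINT x|lborel. W x)"
    using int_W L2_integrable_norm_sq[OF L2_p1] L2_integrable_norm_sq[OF L2_p] by simp
  finally show ?thesis
    unfolding W_def by linarith
qed

end

lemma continuous_on_unit_interval_comp:
  fixes g W :: "real \<Rightarrow> real"
  assumes g: "continuous_on {0..1} g" and W: "continuous_on UNIV W" "\<And>x. W x \<in> {0..1}"
  shows "(\<lambda>x. g (W x)) \<in> borel_measurable lborel" and "\<exists>C. \<forall>x. \<bar>g (W x)\<bar> \<le> C"
proof -
  have "continuous_on UNIV (\<lambda>x. g (W x))"
    using W by (intro continuous_on_compose2[OF g]) auto
  then show "(\<lambda>x. g (W x)) \<in> borel_measurable lborel"
    by (simp add: borel_measurable_continuous_onI)
  obtain C where "\<And>v. v \<in> {0..1} \<Longrightarrow> norm (g v) \<le> C"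
    using continuous_on_compact_bound[OF compact_Icc g] by blast
  then show "\<exists>C. \<forall>x. \<bar>g (W x)\<bar> \<le> C"
    using W(2) by auto
qed

lemma reaction_coefficients_bounded:
  fixes W :: "real \<Rightarrow> real"
  assumes \<delta>: "0 < \<delta>" and Z: "0 \<le> Z" and \<sigma>: "0 < \<sigma>" and h: "0 \<le> h" "h \<le> 1"
    and W: "continuous_on UNIV W" "\<And>x. W x \<in> {0..1}"
  obtains C where "(\<lambda>x. Frate Z h \<sigma> T \<delta> (W x)) \<in> borel_measurable lborel"
    "(\<lambda>x. Fw Z h \<sigma> T \<delta> (W x)) \<in> borel_measurable lborel"
    "\<And>x. 0 \<le> Frate Z h \<sigma> T \<delta> (W x)" "\<And>x. Frate Z h \<sigma> T \<delta> (W x) \<le> C"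
    "\<And>x. 0 \<le> Fw Z h \<sigma> T \<delta> (W x)" "\<And>x. Fw Z h \<sigma> T \<delta> (W x) \<le> C"
proof -
  have unit_subset: "{0..1} \<subseteq> {v. 0 < \<sigma> + (1 - \<sigma>) * v}"
    using unit_interval_denominator_pos \<sigma> by auto
  note F = continuous_on_unit_interval_comp
      [OF continuous_on_subset[OF continuous_on_Frate[OF \<delta>] unit_subset] W]
  note Fw = continuous_on_unit_interval_comp
      [OF continuous_on_subset[OF continuous_on_Fw[OF \<delta>] unit_subset] W]
  obtain CF CFw where CF: "\<And>x. \<bar>Frate Z h \<sigma> T \<delta> (W x)\<bar> \<le> CF"
    and CFw: "\<And>x. \<bar>Fw Z h \<sigma> T \<delta> (W x)\<bar> \<le> CFw"
    using F(2) Fw(2) by blast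
  have "0 \<le> Fw Z h \<sigma> T \<delta> (W x)" for x
    using unit_interval_denominator_pos[OF \<sigma>, of h] unit_interval_denominator_pos[OF \<sigma>, of "W x"]
      W(2)[of x] Fw_nonneg[OF \<delta> Z] h by simp
  moreover have "Frate Z h \<sigma> T \<delta> (W x) \<le> max CF CFw" "Fw Z h \<sigma> T \<delta> (W x) \<le> max CF CFw" for x
    using CF[of x] CFw[of x] by linarith+
  ultimately show thesis
    using that[of "max CF CFw"] F(1) Fw(1) Frate_nonneg[OF \<delta>] by blast
qed

lemma linearized_front_eigenproblem:
  fixes u y :: "real \<Rightarrow> real"
  assumes \<delta>: "0 < \<delta>" and Z: "0 \<le> Z" and \<sigma>: "0 < \<sigma>" and h: "0 \<le> h" "h \<le> 1"
    and cont: "continuous_on UNIV u" "continuous_on UNIV y"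
    and w_bounds: "\<And>x. 0 \<le> h * u x + (1 - h) * (1 - y x) \<and> h * u x + (1 - h) * (1 - y x) \<le> 1"
    and y_bounds: "\<And>x. 0 \<le> y x \<and> y x \<le> 1"
    and H2: "H2 p p1 p2" and L2: "L2 q"
    and eq: "\<And>x. lam * p x = p2 x + of_real c * p1 x
        + of_real (Fw Z h \<sigma> T \<delta> (h * u x + (1 - h) * (1 - y x)) * y x)
            * (of_real h * p x - of_real (1 - h) * q x)
        + of_real (Frate Z h \<sigma> T \<delta> (h * u x + (1 - h) * (1 - y x))) * q x"
  obtains B where "linearized_eigenproblem p p1 p2 q
    (\<lambda>x. Fw Z h \<sigma> T \<delta> (h * u x + (1 - h) * (1 - y x)) * y x)
    (\<lambda>x. Frate Z h \<sigma> T \<delta> (h * u x + (1 - h) * (1 - y x))) lam c h B"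
proof -
  define W where "W x = h * u x + (1 - h) * (1 - y x)" for x
  have "continuous_on UNIV W"
    unfolding W_def by (intro continuous_intros cont)
  moreover have "W x \<in> {0..1}" for x
    using w_bounds by (simp add: W_def)
  ultimately obtain C where F: "(\<lambda>x. Frate Z h \<sigma> T \<delta> (W x)) \<in> borel_measurable lborel"
    "\<And>x. 0 \<le> Frate Z h \<sigma> T \<delta> (W x)" "\<And>x. Frate Z h \<sigma> T \<delta> (W x) \<le> C"
    and Fw: "(\<lambda>x. Fw Z h \<sigma> T \<delta> (W x)) \<in> borel_measurable lborel"
    "\<And>x. 0 \<le> Fw Z h \<sigma> T \<delta> (W x)" "\<And>x. Fw Z h \<sigma> T \<delta> (W x) \<le> C"
    using reaction_coefficients_bounded[OF \<delta> Z \<sigma> h] by metis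
  have "linearized_eigenproblem p p1 p2 q (\<lambda>x. Fw Z h \<sigma> T \<delta> (W x) * y x)
    (\<lambda>x. Frate Z h \<sigma> T \<delta> (W x)) lam c h C"
  proof
    show "(\<lambda>x. Fw Z h \<sigma> T \<delta> (W x) * y x) \<in> borel_measurable lborel"
      using Fw(1) borel_measurable_continuous_onI[OF cont(2)] by measurable
    fix x
    have "Fw Z h \<sigma> T \<delta> (W x) * y x \<le> Fw Z h \<sigma> T \<delta> (W x)"
      using Fw(2)[of x] y_bounds[of x] by (simp add: mult_left_le)
    then show "Fw Z h \<sigma> T \<delta> (W x) * y x \<le> C"
      using Fw(3)[of x] by linarith
    show "0 \<le> Fw Z h \<sigma> T \<delta> (W x) * y x"
      using Fw(2)[of x] y_bounds[of x] by simp
  qed (use H2 L2 F h(2) eq in \<open>simp_all add: W_def\<close>)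
  then show thesis
    unfolding W_def by (rule that)
qed

theorem lemma4p1:
  fixes eps h Z \<sigma> Tign \<delta> c :: real
    and u u1 u2 y y1 y2 :: "real \<Rightarrow> real"
    and lam :: complex
    and p p1 p2 q q1 q2 :: "real \<Rightarrow> complex"
    and eps1 :: real
  assumes eps: "0 < eps" "eps < 1"
    and h: "0 < h" "h < 1"
    and Z: "0 < Z"
    and \<sigma>: "0 < \<sigma>" "\<sigma> < 1"
    and Tign: "0 < Tign"
    and \<delta>: "0 < \<delta>" "Tign + 2 * \<delta> < 1"
    and c: "0 < c"
    and u_deriv: "\<And>x. (u has_real_derivative u1 x) (at x)"
                 "\<And>x. (u1 has_real_derivative u2 x) (at x)"
    and y_deriv: "\<And>x. (y has_real_derivative y1 x) (at x)"
                 "\<And>x. (y1 has_real_derivative y2 x) (at x)"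
    and front_u: "\<And>x. u2 x + c * u1 x
                   + y x * Frate Z h \<sigma> Tign \<delta> (h * u x + (1 - h) * (1 - y x)) = 0"
    and front_y: "\<And>x. eps * y2 x + c * y1 x
                   - y x * Frate Z h \<sigma> Tign \<delta> (h * u x + (1 - h) * (1 - y x)) = 0"
    and lim_u: "(u \<longlongrightarrow> 1) at_bot" "(u \<longlongrightarrow> 0) at_top"
    and lim_y: "(y \<longlongrightarrow> 0) at_bot" "(y \<longlongrightarrow> 1) at_top"
    and y_bounds: "\<And>x. 0 \<le> y x \<and> y x \<le> 1"
    and w_bounds: "\<And>x. 0 \<le> h * u x + (1 - h) * (1 - y x) \<and> h * u x + (1 - h) * (1 - y x) \<le> 1"
    and Re_lam: "0 \<le> Re lam"
    and p_H2: "H2 p p1 p2"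
    and q_H2: "H2 q q1 q2"
    and eq_p: "\<And>x. lam * p x = p2 x + of_real c * p1 x
         + of_real (Fw Z h \<sigma> Tign \<delta> (h * u x + (1 - h) * (1 - y x)) * y x)
             * (of_real h * p x - of_real (1 - h) * q x)
         + of_real (Frate Z h \<sigma> Tign \<delta> (h * u x + (1 - h) * (1 - y x))) * q x"
    and eq_q: "\<And>x. lam * q x = of_real eps * q2 x + of_real c * q1 x
         - of_real (Fw Z h \<sigma> Tign \<delta> (h * u x + (1 - h) * (1 - y x)) * y x)
             * (of_real h * p x - of_real (1 - h) * q x)
         - of_real (Frate Z h \<sigma> Tign \<delta> (h * u x + (1 - h) * (1 - y x))) * q x"
    and eps1: "0 < eps1"
  shows
   "Re lam * (LINT x|lborel. (cmod (p x))\<^sup>2)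
      \<le> h * (LINT x|lborel. Fw Z h \<sigma> Tign \<delta> (h * u x + (1 - h) * (1 - y x)) * y x * (cmod (p x))\<^sup>2)
        + (LINT x|lborel.
            (Frate Z h \<sigma> Tign \<delta> (h * u x + (1 - h) * (1 - y x))
              + (1 - h) * Fw Z h \<sigma> Tign \<delta> (h * u x + (1 - h) * (1 - y x)) * y x)
            * ((cmod (q x))\<^sup>2 / (4 * eps1) + eps1 * (cmod (p x))\<^sup>2))
    \<and> (Re lam + \<bar>Im lam\<bar>) * (LINT x|lborel. (cmod (p x))\<^sup>2)
      \<le> c\<^sup>2 / 4 * (LINT x|lborel. (cmod (p x))\<^sup>2)
        + h * (LINT x|lborel. Fw Z h \<sigma> Tign \<delta> (h * u x + (1 - h) * (1 - y x)) * y x * (cmod (p x))\<^sup>2)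
        + (LINT x|lborel.
            (Frate Z h \<sigma> Tign \<delta> (h * u x + (1 - h) * (1 - y x))
              + (1 - h) * Fw Z h \<sigma> Tign \<delta> (h * u x + (1 - h) * (1 - y x)) * y x)
            * ((cmod (q x))\<^sup>2 / (2 * eps1) + eps1 * (cmod (p x))\<^sup>2))"
proof -
  have "isCont u x" "isCont y x" for x
    using u_deriv(1) y_deriv(1) by (blast intro: DERIV_isCont)+
  then have "continuous_on UNIV u" "continuous_on UNIV y"
    by (simp_all add: continuous_at_imp_continuous_on)
  moreover have "L2 q"
    using q_H2 by (simp add: H2_def)
  ultimately obtain B where "linearized_eigenproblem p p1 p2 q
      (\<lambda>x. Fw Z h \<sigma> Tign \<delta> (h * u x + (1 - h) * (1 - y x)) * y x)
      (\<lambda>x. Frate Z h \<sigma> Tign \<delta> (h * u x + (1 - h) * (1 - y x))) lam c h B"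
    using linearized_front_eigenproblem[OF \<delta>(1) less_imp_le[OF Z] \<sigma>(1) less_imp_le[OF h(1)]
        less_imp_le[OF h(2)] _ _ w_bounds y_bounds p_H2 _ eq_p]
    by blast
  then interpret linearized_eigenproblem p p1 p2 q
    "\<lambda>x. Fw Z h \<sigma> Tign \<delta> (h * u x + (1 - h) * (1 - y x)) * y x"
    "\<lambda>x. Frate Z h \<sigma> Tign \<delta> (h * u x + (1 - h) * (1 - y x))" lam c h B .
  show ?thesis
    using estimate_Re[OF eps1] estimate_Re_Im[OF eps1] by (simp add: mult.assoc)
qed

end
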